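(* Let $G$ be a graph with no isolated vertices and let $S\subseteq V(G)$. If $N[v]\subseteq S$ for some vertex $v$, then $S$ is not a ZIr-set. Equivalently, if $S$ is a ZIr-set of $G$, then $V(G)\setminus S$ is a dominating set of $G$.
   Context: $N[v]=N(v)\cup\{v\}$ is the closed neighborhood. A dominating set is a set $D$ such that every vertex is in $D$ or adjacent to a vertex of $D$. A nonempty $F\subseteq V(G)$ is a fort if every $v\notin F$ satisfies $|N(v)\cap F|\ne1$. For $S\subseteq V(G)$, $x\in S$, a private fort of $x$ relative to $S$ is a fort $F$ with $S\cap F=\{x\}$. $S$ is a ZIr-set if every element of $S$ has a private fort relative to $S$. *)

theory Defs
  imports Main
begin

definition graph :: "'a set \<Rightarrow> ('a \<Rightarrow> 'a \<Rightarrow> bool) \<Rightarrow> bool" where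
  "graph V E \<longleftrightarrow> finite V \<and> (\<forall>u v. E u v \<longrightarrow> u \<in> V \<and> v \<in> V)
     \<and> (\<forall>u v. E u v \<longrightarrow> E v u) \<and> (\<forall>v. \<not> E v v)"

definition nbhd :: "'a set \<Rightarrow> ('a \<Rightarrow> 'a \<Rightarrow> bool) \<Rightarrow> 'a \<Rightarrow> 'a set" where
  "nbhd V E v = {u \<in> V. E v u}"

definition closed_nbhd :: "'a set \<Rightarrow> ('a \<Rightarrow> 'a \<Rightarrow> bool) \<Rightarrow> 'a \<Rightarrow> 'a set" where
  "closed_nbhd V E v = insert v (nbhd V E v)"

definition no_isolated :: "'a set \<Rightarrow> ('a \<Rightarrow> 'a \<Rightarrow> bool) \<Rightarrow> bool" where
  "no_isolated V E \<longleftrightarrow> (\<forall>v\<in>V. nbhd V E v \<noteq> {})"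

definition dominating :: "'a set \<Rightarrow> ('a \<Rightarrow> 'a \<Rightarrow> bool) \<Rightarrow> 'a set \<Rightarrow> bool" where
  "dominating V E D \<longleftrightarrow> D \<subseteq> V \<and> (\<forall>v\<in>V. v \<in> D \<or> (\<exists>u\<in>D. E v u))"

definition fort :: "'a set \<Rightarrow> ('a \<Rightarrow> 'a \<Rightarrow> bool) \<Rightarrow> 'a set \<Rightarrow> bool" where
  "fort V E F \<longleftrightarrow> F \<noteq> {} \<and> F \<subseteq> V \<and> (\<forall>v \<in> V - F. card (nbhd V E v \<inter> F) \<noteq> 1)"

definition private_fort :: "'a set \<Rightarrow> ('a \<Rightarrow> 'a \<Rightarrow> bool) \<Rightarrow> 'a set \<Rightarrow> 'a \<Rightarrow> 'a set \<Rightarrow> bool" where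
  "private_fort V E S x F \<longleftrightarrow> fort V E F \<and> S \<inter> F = {x}"

definition ZIr_set :: "'a set \<Rightarrow> ('a \<Rightarrow> 'a \<Rightarrow> bool) \<Rightarrow> 'a set \<Rightarrow> bool" where
  "ZIr_set V E S \<longleftrightarrow> S \<subseteq> V \<and> (\<forall>x\<in>S. \<exists>F. private_fort V E S x F)"

end

theory Submission
  imports Defs
begin

text \<open>If \<open>N[v] \<subseteq> S\<close> and \<open>u\<close> is a neighbour of \<open>v\<close>, then any fort \<open>F\<close> with \<open>S \<inter> F = {u}\<close>
  misses \<open>v\<close> but meets \<open>N(v)\<close> exactly in \<open>u\<close>, violating the fort condition at \<open>v\<close>.
  Hence \<open>S\<close> fails to be a ZIr-set, and since every non-dominated vertex of \<open>V - S\<close>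
  has its closed neighbourhood inside \<open>S\<close>, the complement of a ZIr-set dominates.\<close>

lemma no_private_fort_of_neighbour:
  assumes "v \<in> V" "u \<in> nbhd V E v" "u \<noteq> v" "closed_nbhd V E v \<subseteq> S"
  shows "\<not> private_fort V E S u F"
proof
  assume "private_fort V E S u F"
  then have fort: "fort V E F" and SF: "S \<inter> F = {u}"
    unfolding private_fort_def by blast+
  have "v \<in> S" using assms(4) unfolding closed_nbhd_def by blast
  then have "v \<in> V - F" using SF \<open>v \<in> V\<close> \<open>u \<noteq> v\<close> by auto
  moreover have "card (nbhd V E v \<inter> F) = 1"
  proof -
    have "nbhd V E v \<inter> F = {u}"
      using SF assms(2,4) unfolding closed_nbhd_def by blast
    then show ?thesis by simp
  qed
  ultimately show False using fort unfolding fort_def by blast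
qed

lemma closed_nbhd_subset_not_ZIr_set:
  assumes "graph V E" "no_isolated V E" "v \<in> V" "closed_nbhd V E v \<subseteq> S"
  shows "\<not> ZIr_set V E S"
proof -
  obtain u where u: "u \<in> nbhd V E v"
    using assms(2,3) unfolding no_isolated_def by blast
  have "u \<noteq> v" using u assms(1) unfolding nbhd_def graph_def by blast
  moreover have "u \<in> S" using u assms(4) unfolding closed_nbhd_def by blast
  ultimately show ?thesis
    using no_private_fort_of_neighbour[OF assms(3) u] assms(4) unfolding ZIr_set_def by blast
qed

lemma not_dominating_complement:
  assumes "S \<subseteq> V" "\<not> dominating V E (V - S)"
  obtains v where "v \<in> V" "closed_nbhd V E v \<subseteq> S"
  using assms unfolding dominating_def closed_nbhd_def nbhd_def by blast

theorem lemma2p8: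
  fixes V :: "'a set" and E :: "'a \<Rightarrow> 'a \<Rightarrow> bool" and S :: "'a set"
  assumes "graph V E" and "no_isolated V E" and "S \<subseteq> V"
  shows "((\<exists>v\<in>V. closed_nbhd V E v \<subseteq> S) \<longrightarrow> \<not> ZIr_set V E S)
       \<and> (ZIr_set V E S \<longrightarrow> dominating V E (V - S))"
  using closed_nbhd_subset_not_ZIr_set[OF assms(1,2)]
    not_dominating_complement[OF assms(3)] by blast

end
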